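(* Let $m\geq 2$, $a\geq 1$ be integers and let $S_{ma}$ denote the symmetric group on $[m]\times[a]$, where $[n]=\{1,\dots,n\}$. Define embeddings $f:S_m\to S_{ma}$ by $f(\tau)(i,j)=(\tau(i),j)$ and $g:S_a\to S_{ma}$ by $g(\sigma)(i,j)=(i,\sigma(j))$. If $m=2$ define $h:(\mathbb{Z}/2\mathbb{Z})^a\to S_{2a}$ by $h(\epsilon_1,\dots,\epsilon_a)(i,j)=(i+\epsilon_j,j)$, where $i+\epsilon_j$ is taken in $\{1,2\}$ with $1+\bar0=1$, $1+\bar1=2$, $2+\bar0=2$, $2+\bar1=1$; if $m\geq 3$ set $h=f$. Then $$N_{S_{ma}}(\mathrm{im}(f))=\mathrm{im}(h)\cdot\mathrm{im}(g).$$
   Context: $N_G(H)$ denotes the normalizer of a subgroup $H$ in $G$. *)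

theory Defs
  imports "HOL-Algebra.Algebra"
begin

text \<open>The index set [m] x [a]; S_{ma} is BijGroup of this set.\<close>
definition grid :: "nat \<Rightarrow> nat \<Rightarrow> (nat \<times> nat) set" where
  "grid m a = {1..m} \<times> {1..a}"

definition embed_f :: "nat \<Rightarrow> nat \<Rightarrow> (nat \<Rightarrow> nat) \<Rightarrow> (nat \<times> nat \<Rightarrow> nat \<times> nat)" where
  "embed_f m a tau = (\<lambda>(i, j) \<in> grid m a. (tau i, j))"

definition embed_g :: "nat \<Rightarrow> nat \<Rightarrow> (nat \<Rightarrow> nat) \<Rightarrow> (nat \<times> nat \<Rightarrow> nat \<times> nat)" where
  "embed_g m a sigma = (\<lambda>(i, j) \<in> grid m a. (i, sigma j))"

text \<open>For m = 2: h(eps)(i,j) = (i + eps_j, j), with eps_j in Z/2Z represented by 0 or 1,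
  and i + 1 in {1,2} meaning the swap 1 <-> 2, i.e. 3 - i.\<close>
definition embed_h2 :: "nat \<Rightarrow> (nat \<Rightarrow> nat) \<Rightarrow> (nat \<times> nat \<Rightarrow> nat \<times> nat)" where
  "embed_h2 a eps = (\<lambda>(i, j) \<in> grid 2 a. (if eps j = 1 then 3 - i else i, j))"

definition im_f :: "nat \<Rightarrow> nat \<Rightarrow> (nat \<times> nat \<Rightarrow> nat \<times> nat) set" where
  "im_f m a = embed_f m a ` carrier (BijGroup {1..m})"

definition im_g :: "nat \<Rightarrow> nat \<Rightarrow> (nat \<times> nat \<Rightarrow> nat \<times> nat) set" where
  "im_g m a = embed_g m a ` carrier (BijGroup {1..a})"

text \<open>(Z/2Z)^a is represented by the functions {1..a} -> {0,1} (extensional).\<close>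
definition im_h :: "nat \<Rightarrow> nat \<Rightarrow> (nat \<times> nat \<Rightarrow> nat \<times> nat) set" where
  "im_h m a = (if m = 2 then embed_h2 a ` ({1..a} \<rightarrow>\<^sub>E {0, 1}) else im_f m a)"

end

theory Submission
  imports Defs
begin

text \<open>An element \<pi> of the normalizer conjugates every f(\<tau>) into some f(\<tau>'). For a
  transposition \<tau> this shows that \<pi> maps each fibre [m] \<times> {j} onto a fibre [m] \<times> {\<sigma> j},
  so \<pi>(i, j) = (\<rho>_j i, \<sigma> j) with \<sigma> \<in> S_a and \<rho>_j \<in> S_m, and all \<rho>_j conjugate \<tau> into the same
  \<tau>'. Hence the \<rho>_j differ from each other by central elements of S_m. For m \<ge> 3 the centre
  is trivial, so \<pi> = f(\<rho>_1) g(\<sigma>); for m = 2 each \<rho>_j is the identity or the swap, which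
  says \<pi> = h(\<epsilon>) g(\<sigma>). Conversely im(g), and for m = 2 also im(h), commute with im(f).\<close>

lemma carrier_BijGroup: "carrier (BijGroup S) = Bij S"
  by (simp add: BijGroup_def)

lemma restrict_in_Bij: "bij_betw f S S \<Longrightarrow> restrict f S \<in> Bij S"
  by (simp add: Bij_def)

lemma transpose_in_Bij:
  "i \<in> S \<Longrightarrow> l \<in> S \<Longrightarrow> restrict (transpose i l) S \<in> Bij S"
  by (simp add: restrict_in_Bij)

lemma BijI_finite:
  assumes "finite S" "f \<in> extensional S" "f \<in> S \<rightarrow> S" "inj_on f S"
  shows "f \<in> Bij S"
  using assms endo_inj_surj[of S f] by (auto simp: Bij_def bij_betw_def)

lemma BijGroup_mult_closed:
  "f \<in> Bij S \<Longrightarrow> g \<in> Bij S \<Longrightarrow> f \<otimes>\<^bsub>BijGroup S\<^esub> g \<in> Bij S"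
  by (simp add: BijGroup_def compose_Bij)

lemma BijGroup_mult_apply:
  assumes "f \<in> Bij S" "g \<in> Bij S" "x \<in> S"
  shows "(f \<otimes>\<^bsub>BijGroup S\<^esub> g) x = f (g x)"
  using assms by (simp add: BijGroup_def compose_def)

lemma BijGroup_mult_eqI:
  assumes "\<pi> \<in> Bij S" "f \<in> Bij S" "g \<in> Bij S" "\<And>x. x \<in> S \<Longrightarrow> \<pi> x = f (g x)"
  shows "\<pi> = f \<otimes>\<^bsub>BijGroup S\<^esub> g"
  using assms
  by (intro extensionalityI[of _ S]) (simp_all add: Bij_imp_extensional BijGroup_mult_closed BijGroup_mult_apply)

lemma BijGroup_commuteI:
  assumes "f \<in> Bij S" "g \<in> Bij S" "\<And>x. x \<in> S \<Longrightarrow> f (g x) = g (f x)"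
  shows "f \<otimes>\<^bsub>BijGroup S\<^esub> g = g \<otimes>\<^bsub>BijGroup S\<^esub> f"
  using assms by (intro BijGroup_mult_eqI) (simp_all add: BijGroup_mult_closed BijGroup_mult_apply)

lemma (in group) normalizerI_commute:
  assumes "H \<subseteq> carrier G" "x \<in> carrier G" "\<And>h. h \<in> H \<Longrightarrow> x \<otimes> h = h \<otimes> x"
  shows "x \<in> normalizer G H"
proof -
  have "x <# H = H #> x"
    using assms(3) unfolding l_coset_def r_coset_def by auto
  then have "x <# H #> inv x = H"
    using assms(1,2) by (simp add: coset_mult_assoc)
  then show ?thesis
    using assms(1,2) unfolding normalizer_def stabilizer_def by auto
qed

lemma (in group) subgroup_subset_normalizer:
  "subgroup H G \<Longrightarrow> H \<subseteq> normalizer G H"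
  using subgroup.subset[OF normal_imp_subgroup[OF subgroup_in_normalizer]] by simp

lemma (in group) normalizer_conj:
  assumes "H \<subseteq> carrier G" "x \<in> normalizer G H" "h \<in> H"
  obtains h' where "h' \<in> H" "x \<otimes> h = h' \<otimes> x"
proof
  have x: "x \<in> carrier G" and conj: "x <# H #> inv x = H"
    using assms(1,2) unfolding normalizer_def stabilizer_def by auto
  have "x \<otimes> h \<otimes> inv x \<in> x <# H #> inv x"
    using assms(3) unfolding l_coset_def r_coset_def by auto
  then show "x \<otimes> h \<otimes> inv x \<in> H"
    using conj by simp
  show "x \<otimes> h = x \<otimes> h \<otimes> inv x \<otimes> x"
    using x assms(1,3) by (auto simp: m_assoc)
qed

lemma bij_betw_1_2_cases:
  fixes \<rho> :: "nat \<Rightarrow> nat"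
  assumes "bij_betw \<rho> {1..2} {1..2}"
  shows "\<rho> 1 = 1 \<and> \<rho> 2 = 2 \<or> \<rho> 1 = 2 \<and> \<rho> 2 = 1"
proof -
  have "\<rho> 1 \<in> {1..2}" "\<rho> 2 \<in> {1..2}"
    using bij_betw_apply[OF assms] by auto
  moreover have "\<rho> 1 \<noteq> \<rho> 2"
    using inj_onD[OF bij_betw_imp_inj_on[OF assms], of 1 2] by auto
  ultimately show ?thesis
    by auto
qed

text \<open>The centre of the symmetric group on at least three letters is trivial, in relative form.\<close>
lemma eq_if_same_transposition_conjugates:
  assumes "3 \<le> card A" "inj_on \<rho>' A" "\<rho>' ` A \<subseteq> \<rho> ` A"
    and conj: "\<And>i l. i \<in> A \<Longrightarrow> l \<in> A \<Longrightarrow> \<exists>\<tau>'. \<forall>k \<in> A.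
       \<rho> (transpose i l k) = \<tau>' (\<rho> k) \<and> \<rho>' (transpose i l k) = \<tau>' (\<rho>' k)"
    and "x \<in> A"
  shows "\<rho>' x = \<rho> x"
proof -
  obtain k where k: "k \<in> A" "\<rho>' x = \<rho> k"
    using assms(3,5) by blast
  have "k = x"
  proof (rule ccontr)
    assume "k \<noteq> x"
    have "card {x, k} < card A"
      using assms(1) by (simp add: card_insert_if)
    then have "\<not> A \<subseteq> {x, k}"
      using card_mono[of "{x, k}" A] by auto
    then obtain l where l: "l \<in> A" "l \<noteq> x" "l \<noteq> k"
      by blast
    obtain \<tau>' where \<tau>': "\<forall>k \<in> A. \<rho> (transpose x l k) = \<tau>' (\<rho> k) \<and> \<rho>' (transpose x l k) = \<tau>' (\<rho>' k)"
      using conj[OF assms(5) l(1)] by blast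
    have "\<tau>' (\<rho> k) = \<rho> k"
      using \<tau>' k(1) l \<open>k \<noteq> x\<close> by (metis transpose_apply_other)
    then have "\<rho>' l = \<rho>' x"
      using \<tau>' assms(5) k(2) by (metis transpose_apply_first)
    then show False
      using inj_onD[OF assms(2) _ l(1) assms(5)] l(2) by blast
  qed
  then show ?thesis
    using k(2) by simp
qed

lemma bij_betw_fst_fibre:
  assumes \<pi>: "bij_betw \<pi> (A \<times> B) (A \<times> B)" and "finite A" "j \<in> B"
    and same_fibre: "\<And>i i'. i \<in> A \<Longrightarrow> i' \<in> A \<Longrightarrow> snd (\<pi> (i, j)) = snd (\<pi> (i', j))"
  shows "bij_betw (\<lambda>i. fst (\<pi> (i, j))) A A"
proof -
  have into: "(\<lambda>i. fst (\<pi> (i, j))) ` A \<subseteq> A"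
  proof clarify
    fix i assume "i \<in> A"
    then have "\<pi> (i, j) \<in> A \<times> B"
      using \<open>j \<in> B\<close> by (intro bij_betw_apply[OF \<pi>]) simp
    then show "fst (\<pi> (i, j)) \<in> A"
      by (simp add: mem_Times_iff)
  qed
  have inj: "inj_on (\<lambda>i. fst (\<pi> (i, j))) A"
  proof (rule inj_onI)
    fix i i' assume i: "i \<in> A" "i' \<in> A" and "fst (\<pi> (i, j)) = fst (\<pi> (i', j))"
    then have "\<pi> (i, j) = \<pi> (i', j)"
      using same_fibre[of i i'] by (simp add: prod_eq_iff)
    then have "(i, j) = (i', j)"
      by (rule inj_onD[OF bij_betw_imp_inj_on[OF \<pi>]]) (use i \<open>j \<in> B\<close> in simp_all)
    then show "i = i'"
      by simp
  qed
  show ?thesis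
    unfolding bij_betw_def by (rule conjI[OF inj endo_inj_surj[OF \<open>finite A\<close> into inj]])
qed

lemma bij_betw_snd_fibre:
  assumes \<pi>: "bij_betw \<pi> (A \<times> B) (A \<times> B)" and "finite B" "i\<^sub>0 \<in> A"
    and same_fibre: "\<And>i i' j. i \<in> A \<Longrightarrow> i' \<in> A \<Longrightarrow> j \<in> B \<Longrightarrow> snd (\<pi> (i, j)) = snd (\<pi> (i', j))"
  shows "bij_betw (\<lambda>j. snd (\<pi> (i\<^sub>0, j))) B B"
proof -
  have into: "(\<lambda>j. snd (\<pi> (i\<^sub>0, j))) ` B \<subseteq> B"
  proof clarify
    fix j assume "j \<in> B"
    then have "\<pi> (i\<^sub>0, j) \<in> A \<times> B"
      using \<open>i\<^sub>0 \<in> A\<close> by (intro bij_betw_apply[OF \<pi>]) simp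
    then show "snd (\<pi> (i\<^sub>0, j)) \<in> B"
      by (simp add: mem_Times_iff)
  qed
  have onto: "B \<subseteq> (\<lambda>j. snd (\<pi> (i\<^sub>0, j))) ` B"
  proof
    fix k assume "k \<in> B"
    then have "(i\<^sub>0, k) \<in> \<pi> ` (A \<times> B)"
      using \<pi> \<open>i\<^sub>0 \<in> A\<close> by (simp add: bij_betw_def)
    then obtain i j where ij: "i \<in> A" "j \<in> B" "\<pi> (i, j) = (i\<^sub>0, k)"
      by auto
    then have "k = snd (\<pi> (i\<^sub>0, j))"
      using same_fibre[of i i\<^sub>0 j] \<open>i\<^sub>0 \<in> A\<close> by simp
    then show "k \<in> (\<lambda>j. snd (\<pi> (i\<^sub>0, j))) ` B"
      using \<open>j \<in> B\<close> by blast
  qed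
  show ?thesis
    unfolding bij_betw_def by (rule conjI[OF finite_surj_inj[OF \<open>finite B\<close> onto] equalityI[OF into onto]])
qed

lemma embed_f_apply [simp]:
  "i \<in> {1..m} \<Longrightarrow> j \<in> {1..a} \<Longrightarrow> embed_f m a \<tau> (i, j) = (\<tau> i, j)"
  by (simp add: embed_f_def grid_def)

lemma embed_g_apply [simp]:
  "i \<in> {1..m} \<Longrightarrow> j \<in> {1..a} \<Longrightarrow> embed_g m a \<sigma> (i, j) = (i, \<sigma> j)"
  by (simp add: embed_g_def grid_def)

lemma embed_h2_apply [simp]:
  "i \<in> {1..2} \<Longrightarrow> j \<in> {1..a} \<Longrightarrow> embed_h2 a \<epsilon> (i, j) = (if \<epsilon> j = 1 then 3 - i else i, j)"
  by (simp add: embed_h2_def grid_def)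

lemma embed_f_Bij:
  assumes "\<tau> \<in> Bij {1..m}"
  shows "embed_f m a \<tau> \<in> Bij (grid m a)"
proof -
  have "embed_f m a \<tau> = restrict (map_prod \<tau> id) (grid m a)"
    by (simp add: embed_f_def map_prod_def)
  with assms show ?thesis
    by (simp add: Bij_def grid_def bij_betw_map_prod)
qed

lemma embed_g_Bij:
  assumes "\<sigma> \<in> Bij {1..a}"
  shows "embed_g m a \<sigma> \<in> Bij (grid m a)"
proof -
  have "embed_g m a \<sigma> = restrict (map_prod id \<sigma>) (grid m a)"
    by (simp add: embed_g_def map_prod_def)
  with assms show ?thesis
    by (simp add: Bij_def grid_def bij_betw_map_prod)
qed

lemma embed_h2_Bij: "embed_h2 a \<epsilon> \<in> Bij (grid 2 a)"
  by (rule BijI_finite) (auto simp: grid_def embed_h2_def inj_on_def split: if_splits)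

lemma embed_f_hom: "embed_f m a \<in> hom (BijGroup {1..m}) (BijGroup (grid m a))"
proof (rule homI)
  fix \<tau> \<tau>' assume "\<tau> \<in> carrier (BijGroup {1..m})" "\<tau>' \<in> carrier (BijGroup {1..m})"
  then have \<tau>: "\<tau> \<in> Bij {1..m}" and \<tau>': "\<tau>' \<in> Bij {1..m}"
    by (simp_all add: carrier_BijGroup)
  show "embed_f m a (\<tau> \<otimes>\<^bsub>BijGroup {1..m}\<^esub> \<tau>')
      = embed_f m a \<tau> \<otimes>\<^bsub>BijGroup (grid m a)\<^esub> embed_f m a \<tau>'"
  proof (rule BijGroup_mult_eqI)
    fix x assume "x \<in> grid m a"
    then obtain i j where x: "x = (i, j)" "i \<in> {1..m}" "j \<in> {1..a}"
      by (auto simp: grid_def)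
    moreover have "\<tau>' i \<in> {1..m}"
      using Bij_imp_funcset[OF \<tau>'] x(2) by blast
    ultimately show "embed_f m a (\<tau> \<otimes>\<^bsub>BijGroup {1..m}\<^esub> \<tau>') x = embed_f m a \<tau> (embed_f m a \<tau>' x)"
      using \<tau> \<tau>' by (simp add: BijGroup_mult_apply)
  qed (intro embed_f_Bij BijGroup_mult_closed \<tau> \<tau>')+
qed (simp add: carrier_BijGroup embed_f_Bij)

lemma subgroup_im_f: "subgroup (im_f m a) (BijGroup (grid m a))"
proof -
  interpret group_hom "BijGroup {1..m}" "BijGroup (grid m a)" "embed_f m a"
    by (intro group_hom.intro group_hom_axioms.intro group_BijGroup embed_f_hom)
  show ?thesis
    unfolding im_f_def by (rule img_is_subgroup)
qed

lemma normalizer_im_f_Bij: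
  "\<pi> \<in> normalizer (BijGroup (grid m a)) (im_f m a) \<Longrightarrow> \<pi> \<in> Bij (grid m a)"
  by (simp add: normalizer_def stabilizer_def carrier_BijGroup)

lemma normalizer_im_fI_commute:
  assumes \<gamma>: "\<gamma> \<in> Bij (grid m a)"
    and commute: "\<And>\<tau> x. \<tau> \<in> Bij {1..m} \<Longrightarrow> x \<in> grid m a \<Longrightarrow> \<gamma> (embed_f m a \<tau> x) = embed_f m a \<tau> (\<gamma> x)"
  shows "\<gamma> \<in> normalizer (BijGroup (grid m a)) (im_f m a)"
proof -
  interpret group "BijGroup (grid m a)"
    by (rule group_BijGroup)
  show ?thesis
  proof (rule normalizerI_commute)
    show "im_f m a \<subseteq> carrier (BijGroup (grid m a))"
      by (rule subgroup.subset[OF subgroup_im_f])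
    show "\<gamma> \<in> carrier (BijGroup (grid m a))"
      using \<gamma> by (simp add: carrier_BijGroup)
    fix \<phi> assume "\<phi> \<in> im_f m a"
    then obtain \<tau> where \<tau>: "\<tau> \<in> Bij {1..m}" and \<phi>: "\<phi> = embed_f m a \<tau>"
      by (auto simp: im_f_def carrier_BijGroup)
    show "\<gamma> \<otimes>\<^bsub>BijGroup (grid m a)\<^esub> \<phi> = \<phi> \<otimes>\<^bsub>BijGroup (grid m a)\<^esub> \<gamma>"
      unfolding \<phi> using \<gamma> embed_f_Bij[OF \<tau>] commute[OF \<tau>] by (rule BijGroup_commuteI)
  qed
qed

lemma im_g_subset_normalizer: "im_g m a \<subseteq> normalizer (BijGroup (grid m a)) (im_f m a)"
proof
  fix \<gamma> assume "\<gamma> \<in> im_g m a"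
  then obtain \<sigma> where \<sigma>: "\<sigma> \<in> Bij {1..a}" and \<gamma>: "\<gamma> = embed_g m a \<sigma>"
    by (auto simp: im_g_def carrier_BijGroup)
  show "\<gamma> \<in> normalizer (BijGroup (grid m a)) (im_f m a)"
    unfolding \<gamma>
  proof (rule normalizer_im_fI_commute[OF embed_g_Bij[OF \<sigma>]])
    fix \<tau> x assume \<tau>: "\<tau> \<in> Bij {1..m}" and "x \<in> grid m a"
    then obtain i j where x: "x = (i, j)" "i \<in> {1..m}" "j \<in> {1..a}"
      by (auto simp: grid_def)
    moreover have "\<tau> i \<in> {1..m}" "\<sigma> j \<in> {1..a}"
      using Bij_imp_funcset[OF \<tau>] Bij_imp_funcset[OF \<sigma>] x by blast+
    ultimately show "embed_g m a \<sigma> (embed_f m a \<tau> x) = embed_f m a \<tau> (embed_g m a \<sigma> x)"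
      by simp
  qed
qed

lemma im_h_subset_normalizer: "im_h m a \<subseteq> normalizer (BijGroup (grid m a)) (im_f m a)"
proof (cases "m = 2")
  case True
  show ?thesis
  proof
    fix \<gamma> assume "\<gamma> \<in> im_h m a"
    then obtain \<epsilon> where \<gamma>: "\<gamma> = embed_h2 a \<epsilon>"
      using True by (auto simp: im_h_def)
    show "\<gamma> \<in> normalizer (BijGroup (grid m a)) (im_f m a)"
      unfolding \<gamma> True
    proof (rule normalizer_im_fI_commute[OF embed_h2_Bij])
      fix \<tau> x assume \<tau>: "\<tau> \<in> Bij {1..2::nat}" and "x \<in> grid 2 a"
      then obtain i j where x: "x = (i, j)" "i \<in> {1..2}" "j \<in> {1..a}"
        by (auto simp: grid_def)
      have \<tau>_bij: "bij_betw \<tau> {1..2} {1..2}"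
        using \<tau> by (simp add: Bij_def)
      have "i = 1 \<or> i = 2"
        using x(2) by auto
      then have "\<tau> i \<in> {1..2} \<and> 3 - i \<in> {1..2} \<and> \<tau> (3 - i) = 3 - \<tau> i"
        using bij_betw_1_2_cases[OF \<tau>_bij] by auto
      then show "embed_h2 a \<epsilon> (embed_f 2 a \<tau> x) = embed_f 2 a \<tau> (embed_h2 a \<epsilon> x)"
        using x by simp
    qed
  qed
next
  case False
  then show ?thesis
    using group.subgroup_subset_normalizer[OF group_BijGroup subgroup_im_f] by (simp add: im_h_def)
qed

lemma normalizer_im_f_conjugate:
  assumes \<pi>: "\<pi> \<in> normalizer (BijGroup (grid m a)) (im_f m a)" and \<tau>: "\<tau> \<in> Bij {1..m}"
  obtains \<tau>' where "\<And>i j. i \<in> {1..m} \<Longrightarrow> j \<in> {1..a} \<Longrightarrow> \<pi> (\<tau> i, j) = apfst \<tau>' (\<pi> (i, j))"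
proof -
  interpret group "BijGroup (grid m a)"
    by (rule group_BijGroup)
  have \<pi>_Bij: "\<pi> \<in> Bij (grid m a)"
    by (rule normalizer_im_f_Bij[OF \<pi>])
  have "embed_f m a \<tau> \<in> im_f m a"
    using \<tau> by (simp add: im_f_def carrier_BijGroup)
  then obtain \<phi> where "\<phi> \<in> im_f m a"
    and conj: "\<pi> \<otimes>\<^bsub>BijGroup (grid m a)\<^esub> embed_f m a \<tau> = \<phi> \<otimes>\<^bsub>BijGroup (grid m a)\<^esub> \<pi>"
    by (rule normalizer_conj[OF subgroup.subset[OF subgroup_im_f] \<pi>])
  then obtain \<tau>' where \<tau>': "\<tau>' \<in> Bij {1..m}" and \<phi>: "\<phi> = embed_f m a \<tau>'"
    by (auto simp: im_f_def carrier_BijGroup)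
  show thesis
  proof (rule that[of \<tau>'])
    fix i j assume ij: "i \<in> {1..m}" "j \<in> {1..a}"
    then have "(i, j) \<in> grid m a"
      by (simp add: grid_def)
    then have "\<pi> (embed_f m a \<tau> (i, j)) = embed_f m a \<tau>' (\<pi> (i, j))"
      using fun_cong[OF conj, of "(i, j)"] \<pi>_Bij embed_f_Bij[OF \<tau>] embed_f_Bij[OF \<tau>']
      by (simp add: \<phi> BijGroup_mult_apply)
    moreover have "\<pi> (i, j) \<in> grid m a"
      using \<pi>_Bij \<open>(i, j) \<in> grid m a\<close> Bij_imp_funcset by blast
    ultimately show "\<pi> (\<tau> i, j) = apfst \<tau>' (\<pi> (i, j))"
      using ij by (cases "\<pi> (i, j)") (simp add: grid_def)
  qed
qed

lemma normalizer_im_f_decompose: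
  assumes \<pi>: "\<pi> \<in> normalizer (BijGroup (grid m a)) (im_f m a)" and "1 \<le> m"
  obtains \<sigma> \<rho> where "\<sigma> \<in> Bij {1..a}" "\<And>j. j \<in> {1..a} \<Longrightarrow> bij_betw (\<rho> j) {1..m} {1..m}"
    "\<And>i j. i \<in> {1..m} \<Longrightarrow> j \<in> {1..a} \<Longrightarrow> \<pi> (i, j) = (\<rho> j i, \<sigma> j)"
proof -
  have \<pi>_bij: "bij_betw \<pi> ({1..m} \<times> {1..a}) ({1..m} \<times> {1..a})"
    using normalizer_im_f_Bij[OF \<pi>] by (simp add: Bij_def grid_def)
  have same_fibre: "snd (\<pi> (i, j)) = snd (\<pi> (i', j))"
    if ij: "i \<in> {1..m}" "i' \<in> {1..m}" "j \<in> {1..a}" for i i' j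
  proof -
    obtain \<tau>' where "\<pi> (restrict (transpose i i') {1..m} i, j) = apfst \<tau>' (\<pi> (i, j))"
      using normalizer_im_f_conjugate[OF \<pi> transpose_in_Bij[OF ij(1,2)]] ij by metis
    then show ?thesis
      using ij(1) by simp
  qed
  define \<sigma> where "\<sigma> = restrict (\<lambda>j. snd (\<pi> (1, j))) {1..a}"
  define \<rho> where "\<rho> j i = fst (\<pi> (i, j))" for j i
  show thesis
  proof (rule that[of \<sigma> \<rho>])
    show "\<sigma> \<in> Bij {1..a}"
      unfolding \<sigma>_def using \<open>1 \<le> m\<close>
      by (intro restrict_in_Bij bij_betw_snd_fibre[OF \<pi>_bij _ _ same_fibre]) simp_all
    show "bij_betw (\<rho> j) {1..m} {1..m}" if "j \<in> {1..a}" for j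
      unfolding \<rho>_def using that by (intro bij_betw_fst_fibre[OF \<pi>_bij _ _ same_fibre]) simp_all
    show "\<pi> (i, j) = (\<rho> j i, \<sigma> j)" if "i \<in> {1..m}" "j \<in> {1..a}" for i j
      using same_fibre[of 1 i j] that \<open>1 \<le> m\<close> by (simp add: \<rho>_def \<sigma>_def prod_eq_iff)
  qed
qed

lemma normalizer_im_f_conjugate_fibres:
  assumes \<pi>: "\<pi> \<in> normalizer (BijGroup (grid m a)) (im_f m a)"
    and \<pi>_eq: "\<And>i j. i \<in> {1..m} \<Longrightarrow> j \<in> {1..a} \<Longrightarrow> \<pi> (i, j) = (\<rho> j i, \<sigma> j)"
    and \<tau>: "\<tau> \<in> Bij {1..m}"
  obtains \<tau>' where "\<And>i j. i \<in> {1..m} \<Longrightarrow> j \<in> {1..a} \<Longrightarrow> \<rho> j (\<tau> i) = \<tau>' (\<rho> j i)"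
proof -
  obtain \<tau>' where \<tau>': "\<And>i j. i \<in> {1..m} \<Longrightarrow> j \<in> {1..a} \<Longrightarrow> \<pi> (\<tau> i, j) = apfst \<tau>' (\<pi> (i, j))"
    using normalizer_im_f_conjugate[OF \<pi> \<tau>] by blast
  show thesis
  proof (rule that[of \<tau>'])
    fix i j assume ij: "i \<in> {1..m}" "j \<in> {1..a}"
    then have "\<tau> i \<in> {1..m}"
      using Bij_imp_funcset[OF \<tau>] by blast
    then show "\<rho> j (\<tau> i) = \<tau>' (\<rho> j i)"
      using \<tau>'[OF ij] \<pi>_eq[OF ij] \<pi>_eq[OF _ ij(2)] by simp
  qed
qed

lemma normalizer_im_f_subset_ge3:
  assumes "3 \<le> m" "1 \<le> a"
  shows "normalizer (BijGroup (grid m a)) (im_f m a) \<subseteq> im_f m a <#>\<^bsub>BijGroup (grid m a)\<^esub> im_g m a"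
proof
  fix \<pi> assume \<pi>: "\<pi> \<in> normalizer (BijGroup (grid m a)) (im_f m a)"
  have "1 \<le> m"
    using assms(1) by simp
  obtain \<sigma> \<rho> where \<sigma>: "\<sigma> \<in> Bij {1..a}" and \<rho>: "\<And>j. j \<in> {1..a} \<Longrightarrow> bij_betw (\<rho> j) {1..m} {1..m}"
    and \<pi>_eq: "\<And>i j. i \<in> {1..m} \<Longrightarrow> j \<in> {1..a} \<Longrightarrow> \<pi> (i, j) = (\<rho> j i, \<sigma> j)"
    using normalizer_im_f_decompose[OF \<pi> \<open>1 \<le> m\<close>] by blast
  have \<rho>_const: "\<rho> j i = \<rho> 1 i" if "i \<in> {1..m}" "j \<in> {1..a}" for i j
  proof (rule eq_if_same_transposition_conjugates[where A = "{1..m}" and \<rho> = "\<rho> 1" and \<rho>' = "\<rho> j"])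
    show "inj_on (\<rho> j) {1..m}" "\<rho> j ` {1..m} \<subseteq> \<rho> 1 ` {1..m}"
      using \<rho>[OF that(2)] \<rho>[of 1] assms(2) by (simp_all add: bij_betw_def)
    fix i' l assume "i' \<in> {1..m}" "l \<in> {1..m}"
    then obtain \<tau>' where "\<And>k j. k \<in> {1..m} \<Longrightarrow> j \<in> {1..a} \<Longrightarrow> \<rho> j (restrict (transpose i' l) {1..m} k) = \<tau>' (\<rho> j k)"
      using normalizer_im_f_conjugate_fibres[OF \<pi> \<pi>_eq transpose_in_Bij] by blast
    then show "\<exists>\<tau>'. \<forall>k \<in> {1..m}.
        \<rho> 1 (transpose i' l k) = \<tau>' (\<rho> 1 k) \<and> \<rho> j (transpose i' l k) = \<tau>' (\<rho> j k)"
      using that(2) assms(2) by auto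
  qed (use assms(1) that(1) in simp_all)
  have \<rho>1: "restrict (\<rho> 1) {1..m} \<in> Bij {1..m}"
    using \<rho>[of 1] assms(2) by (simp add: restrict_in_Bij)
  have "\<pi> = embed_f m a (restrict (\<rho> 1) {1..m}) \<otimes>\<^bsub>BijGroup (grid m a)\<^esub> embed_g m a \<sigma>"
  proof (rule BijGroup_mult_eqI)
    show "\<pi> \<in> Bij (grid m a)"
      by (rule normalizer_im_f_Bij[OF \<pi>])
    fix x assume "x \<in> grid m a"
    then obtain i j where x: "x = (i, j)" "i \<in> {1..m}" "j \<in> {1..a}"
      by (auto simp: grid_def)
    moreover have "\<sigma> j \<in> {1..a}"
      using Bij_imp_funcset[OF \<sigma>] x(3) by blast
    ultimately show "\<pi> x = embed_f m a (restrict (\<rho> 1) {1..m}) (embed_g m a \<sigma> x)"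
      by (simp add: \<pi>_eq \<rho>_const[OF x(2,3)])
  qed (intro embed_f_Bij embed_g_Bij \<rho>1 \<sigma>)+
  then show "\<pi> \<in> im_f m a <#>\<^bsub>BijGroup (grid m a)\<^esub> im_g m a"
    unfolding set_mult_def im_f_def im_g_def using \<rho>1 \<sigma> by (auto simp: carrier_BijGroup)
qed

lemma normalizer_im_f_subset_two:
  "normalizer (BijGroup (grid 2 a)) (im_f 2 a)
     \<subseteq> embed_h2 a ` ({1..a} \<rightarrow>\<^sub>E {0, 1}) <#>\<^bsub>BijGroup (grid 2 a)\<^esub> im_g 2 a"
proof
  fix \<pi> assume \<pi>: "\<pi> \<in> normalizer (BijGroup (grid 2 a)) (im_f 2 a)"
  obtain \<sigma> \<rho> where \<sigma>: "\<sigma> \<in> Bij {1..a}" and \<rho>: "\<And>j. j \<in> {1..a} \<Longrightarrow> bij_betw (\<rho> j) {1..2} {1..2}"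
    and \<pi>_eq: "\<And>i j. i \<in> {1..2} \<Longrightarrow> j \<in> {1..a} \<Longrightarrow> \<pi> (i, j) = (\<rho> j i, \<sigma> j)"
    using normalizer_im_f_decompose[OF \<pi> one_le_numeral] by blast
  \<comment> \<open>h acts after g, so whether \<rho> j is the swap is recorded at \<sigma> j.\<close>
  define \<epsilon> where "\<epsilon> = (\<lambda>k \<in> {1..a}. if \<rho> (inv_into {1..a} \<sigma> k) 1 = 1 then 0 else 1 :: nat)"
  have \<sigma>_bij: "bij_betw \<sigma> {1..a} {1..a}"
    using \<sigma> by (simp add: Bij_def)
  have "\<pi> = embed_h2 a \<epsilon> \<otimes>\<^bsub>BijGroup (grid 2 a)\<^esub> embed_g 2 a \<sigma>"
  proof (rule BijGroup_mult_eqI)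
    show "\<pi> \<in> Bij (grid 2 a)"
      by (rule normalizer_im_f_Bij[OF \<pi>])
    fix x assume "x \<in> grid 2 a"
    then obtain i j where x: "x = (i, j)" "i \<in> {1..2}" "j \<in> {1..a}"
      by (auto simp: grid_def)
    have "\<sigma> j \<in> {1..a}" "inv_into {1..a} \<sigma> (\<sigma> j) = j"
      using bij_betw_apply[OF \<sigma>_bij] bij_betw_inv_into_left[OF \<sigma>_bij] x(3) by auto
    moreover have "i = 1 \<or> i = 2"
      using x(2) by auto
    ultimately show "\<pi> x = embed_h2 a \<epsilon> (embed_g 2 a \<sigma> x)"
      using bij_betw_1_2_cases[OF \<rho>[OF x(3)]] x by (auto simp: \<pi>_eq \<epsilon>_def)
  qed (intro embed_h2_Bij embed_g_Bij \<sigma>)+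
  moreover have "\<epsilon> \<in> {1..a} \<rightarrow>\<^sub>E {0, 1}"
    by (simp add: \<epsilon>_def)
  ultimately show "\<pi> \<in> embed_h2 a ` ({1..a} \<rightarrow>\<^sub>E {0, 1}) <#>\<^bsub>BijGroup (grid 2 a)\<^esub> im_g 2 a"
    unfolding set_mult_def im_g_def using \<sigma> by (auto simp: carrier_BijGroup)
qed

theorem lemma4p3:
  fixes m a :: nat
  assumes "m \<ge> 2" and "a \<ge> 1"
  shows "normalizer (BijGroup (grid m a)) (im_f m a)
           = im_h m a <#>\<^bsub>BijGroup (grid m a)\<^esub> im_g m a"
proof
  interpret group "BijGroup (grid m a)"
    by (rule group_BijGroup)
  have "subgroup (normalizer (BijGroup (grid m a)) (im_f m a)) (BijGroup (grid m a))"
    by (rule normalizer_imp_subgroup[OF subgroup.subset[OF subgroup_im_f]])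
  then show "im_h m a <#>\<^bsub>BijGroup (grid m a)\<^esub> im_g m a \<subseteq> normalizer (BijGroup (grid m a)) (im_f m a)"
    using im_h_subset_normalizer im_g_subset_normalizer
    unfolding set_mult_def by (blast intro: subgroup.m_closed)
  show "normalizer (BijGroup (grid m a)) (im_f m a) \<subseteq> im_h m a <#>\<^bsub>BijGroup (grid m a)\<^esub> im_g m a"
  proof (cases "m = 2")
    case True
    then show ?thesis
      using normalizer_im_f_subset_two by (simp add: im_h_def)
  next
    case False
    then show ?thesis
      using normalizer_im_f_subset_ge3 assms by (simp add: im_h_def)
  qed
qed

end
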